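(* Let $n\ge 2$ and let $q$ be a prime power, and identify $E_q=\{0,1,\dots,q-1\}$ with the finite field $\mathbb{F}_q$, so that $E_q^n$ is an $n$-dimensional vector space over $\mathbb{F}_q$. Then every linear subspace $L\subseteq E_q^n$ with $|L|>1$ is metrically dense: $R(L)\le R(B)$ for every subset $B\subseteq E_q^n$ that is isometric to $L$.
   Context: $E_q^n$ carries the Hamming distance $d_H(x,y)=|\{i: x_i\neq y_i\}|$. For $A\subseteq E_q^n$, $R(A)$ is the number of coordinates $i$ such that the $i$-th coordinates of the elements of $A$ are not all equal (the number of non-constant columns of the matrix whose rows are the elements of $A$). Two subsets $A,B\subseteq E_q^n$ are isometric if there is a bijection $\phi:A\to B$ with $d_H(\phi(x),\phi(y))=d_H(x,y)$ for all $x,y\in A$. *)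

theory Defs
  imports Main
begin

text \<open>Words of length n over a finite field are modelled as functions
  from a finite index type 'n (with CARD('n) = n) to the field type 'a.\<close>

definition hamming :: "('n::finite \<Rightarrow> 'a) \<Rightarrow> ('n \<Rightarrow> 'a) \<Rightarrow> nat" where
  "hamming x y = card {i. x i \<noteq> y i}"

definition R :: "('n::finite \<Rightarrow> 'a) set \<Rightarrow> nat" where
  "R A = card {i. \<exists>x\<in>A. \<exists>y\<in>A. x i \<noteq> y i}"

definition isometric :: "('n::finite \<Rightarrow> 'a) set \<Rightarrow> ('n \<Rightarrow> 'a) set \<Rightarrow> bool" where
  "isometric A B \<longleftrightarrow> (\<exists>\<phi>. bij_betw \<phi> A B \<and>
      (\<forall>x\<in>A. \<forall>y\<in>A. hamming (\<phi> x) (\<phi> y) = hamming x y))"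

definition lin_subspace :: "('n::finite \<Rightarrow> 'a::field) set \<Rightarrow> bool" where
  "lin_subspace L \<longleftrightarrow> (\<lambda>_. 0) \<in> L \<and>
     (\<forall>x\<in>L. \<forall>y\<in>L. (\<lambda>i. x i + y i) \<in> L) \<and>
     (\<forall>c. \<forall>x\<in>L. (\<lambda>i. c * x i) \<in> L)"

definition metrically_dense :: "('n::finite \<Rightarrow> 'a) set \<Rightarrow> bool" where
  "metrically_dense A \<longleftrightarrow> (\<forall>B. isometric A B \<longrightarrow> R A \<le> R B)"

end

theory Submission
  imports Defs "HOL-Analysis.Convex"
begin

text \<open>Sum the Hamming distances of all ordered pairs of a set \<open>A\<close> of \<open>m\<close> words column by
  column. If symbol \<open>a\<close> occurs \<open>c\<^sub>a\<close> times in column \<open>i\<close>, that column contributes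
  \<open>m\<^sup>2 - \<Sum>\<^sub>a c\<^sub>a\<^sup>2\<close>, which by Cauchy-Schwarz is at most \<open>(1 - 1/q) m\<^sup>2\<close>, with equality when
  the column is equidistributed; constant columns contribute nothing. So the total distance
  is at most \<open>(1 - 1/q) m\<^sup>2 R(A)\<close>. In a linear subspace every nonconstant column is
  equidistributed, since adding a suitable multiple of a vector that is nonzero in
  coordinate \<open>i\<close> maps each fibre of column \<open>i\<close> injectively into any other; hence the bound is
  attained by \<open>L\<close>. An isometric copy \<open>B\<close> of \<open>L\<close> has the same size and the same total
  distance, which forces \<open>R(L) \<le> R(B)\<close>.\<close>

definition nonconst_cols :: "('n::finite \<Rightarrow> 'a) set \<Rightarrow> 'n set" where
  "nonconst_cols A = {i. \<exists>x\<in>A. \<exists>y\<in>A. x i \<noteq> y i}"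

definition col_count :: "('n::finite \<Rightarrow> 'a) set \<Rightarrow> 'n \<Rightarrow> 'a \<Rightarrow> nat" where
  "col_count A i a = card {x \<in> A. x i = a}"

definition col_disagreements :: "('n::finite \<Rightarrow> 'a) set \<Rightarrow> 'n \<Rightarrow> nat" where
  "col_disagreements A i = card {p \<in> A \<times> A. fst p i \<noteq> snd p i}"

definition distance_sum :: "('n::finite \<Rightarrow> 'a) set \<Rightarrow> nat" where
  "distance_sum A = (\<Sum>(x, y)\<in>A \<times> A. hamming x y)"

lemma R_eq_card_nonconst_cols: "R A = card (nonconst_cols A)"
  unfolding R_def nonconst_cols_def ..

lemma square_sum_le_card_mult_sum_squares:
  fixes f :: "'b \<Rightarrow> nat"
  shows "(\<Sum>a\<in>S. f a)\<^sup>2 \<le> card S * (\<Sum>a\<in>S. (f a)\<^sup>2)"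
proof -
  have "(\<Sum>a\<in>S. real (f a) * 1)\<^sup>2 \<le> (\<Sum>a\<in>S. (real (f a))\<^sup>2) * (\<Sum>a\<in>S. 1\<^sup>2)"
    by (rule Cauchy_Schwarz_ineq_sum)
  then have "real ((\<Sum>a\<in>S. f a)\<^sup>2) \<le> real (card S * (\<Sum>a\<in>S. (f a)\<^sup>2))"
    by (simp add: mult.commute)
  then show ?thesis
    unfolding of_nat_le_iff .
qed

lemma card_UNIV_field_ge_2: "card (UNIV :: 'a::{finite,field} set) \<ge> 2"
proof -
  have "card {0::'a, 1} \<le> card (UNIV :: 'a set)"
    by (rule card_mono) auto
  then show ?thesis
    by simp
qed

lemma distance_sum_eq_sum_col_disagreements:
  fixes A :: "('n::finite \<Rightarrow> 'a::finite) set"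
  shows "distance_sum A = (\<Sum>i\<in>UNIV. col_disagreements A i)"
proof -
  have "distance_sum A = (\<Sum>p\<in>A \<times> A. \<Sum>i\<in>UNIV. if fst p i \<noteq> snd p i then 1 else 0)"
    unfolding distance_sum_def hamming_def by (simp add: case_prod_beta sum.If_cases)
  also have "\<dots> = (\<Sum>i\<in>UNIV. \<Sum>p\<in>A \<times> A. if fst p i \<noteq> snd p i then 1 else 0)"
    by (rule sum.swap)
  also have "\<dots> = (\<Sum>i\<in>UNIV. col_disagreements A i)"
    unfolding col_disagreements_def by (simp add: sum.If_cases Int_def conj_commute)
  finally show ?thesis .
qed

lemma col_disagreements_eq_0:
  assumes "i \<notin> nonconst_cols A"
  shows "col_disagreements A i = 0"
  using assms unfolding col_disagreements_def nonconst_cols_def by (auto simp: card_eq_0_iff)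

lemma distance_sum_eq_sum_nonconst_cols:
  fixes A :: "('n::finite \<Rightarrow> 'a::finite) set"
  shows "distance_sum A = (\<Sum>i\<in>nonconst_cols A. col_disagreements A i)"
  unfolding distance_sum_eq_sum_col_disagreements
  by (rule sum.mono_neutral_right) (auto intro: col_disagreements_eq_0)

lemma sum_col_count:
  fixes A :: "('n::finite \<Rightarrow> 'a::finite) set"
  shows "(\<Sum>a\<in>UNIV. col_count A i a) = card A"
proof -
  have "(\<Sum>a\<in>UNIV. \<Sum>x\<in>{x \<in> A. x i = a}. 1::nat) = (\<Sum>x\<in>A. 1)"
    by (rule sum.group) auto
  then show ?thesis
    unfolding col_count_def by simp
qed

lemma col_disagreements_add_sum_col_count_squares:
  fixes A :: "('n::finite \<Rightarrow> 'a::finite) set"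
  shows "col_disagreements A i + (\<Sum>a\<in>UNIV. (col_count A i a)\<^sup>2) = (card A)\<^sup>2"
proof -
  define D where "D = {p \<in> A \<times> A. fst p i \<noteq> snd p i}"
  define F where "F a = {x \<in> A. x i = a}" for a
  have agree: "{p \<in> A \<times> A. fst p i = snd p i} = (\<Union>a. F a \<times> F a)"
    unfolding F_def by auto
  have "A \<times> A = D \<union> (\<Union>a. F a \<times> F a)"
    unfolding D_def by (auto simp flip: agree)
  then have "card (A \<times> A) = card (D \<union> (\<Union>a. F a \<times> F a))"
    by simp
  also have "\<dots> = card D + card (\<Union>a. F a \<times> F a)"
    by (rule card_Un_disjoint) (auto simp: D_def F_def)
  also have "card (\<Union>a. F a \<times> F a) = (\<Sum>a\<in>UNIV. card (F a \<times> F a))"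
    by (rule card_UN_disjoint) (auto simp: F_def)
  finally show ?thesis
    unfolding col_disagreements_def col_count_def D_def F_def
    by (simp add: card_cartesian_product power2_eq_square)
qed

lemma card_mult_col_disagreements_le:
  fixes A :: "('n::finite \<Rightarrow> 'a::finite) set"
  shows "card (UNIV :: 'a set) * col_disagreements A i \<le> (card (UNIV :: 'a set) - 1) * (card A)\<^sup>2"
proof -
  let ?S = "\<Sum>a\<in>UNIV. (col_count A i a)\<^sup>2"
  have "(card A)\<^sup>2 \<le> card (UNIV :: 'a set) * ?S"
    using square_sum_le_card_mult_sum_squares[of "col_count A i" UNIV] by (simp add: sum_col_count)
  moreover have "col_disagreements A i + ?S = (card A)\<^sup>2"
    by (rule col_disagreements_add_sum_col_count_squares)
  ultimately have "card (UNIV :: 'a set) * col_disagreements A i + (card A)\<^sup>2 \<le> card (UNIV :: 'a set) * (card A)\<^sup>2"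
    by (metis add_le_cancel_left add_mult_distrib2)
  then show ?thesis
    by (simp add: diff_mult_distrib)
qed

lemma lin_subspace_add:
  "lin_subspace L \<Longrightarrow> x \<in> L \<Longrightarrow> y \<in> L \<Longrightarrow> (\<lambda>i. x i + y i) \<in> L"
  unfolding lin_subspace_def by blast

lemma lin_subspace_smult:
  "lin_subspace L \<Longrightarrow> x \<in> L \<Longrightarrow> (\<lambda>i. c * x i) \<in> L"
  unfolding lin_subspace_def by blast

lemma subspace_col_count_eq:
  fixes L :: "('n::finite \<Rightarrow> 'a::field) set"
  assumes L: "lin_subspace L" and v: "v \<in> L" "v i \<noteq> 0" and "finite L"
  shows "col_count L i a = col_count L i b"
proof -
  have le: "col_count L i a \<le> col_count L i b" for a b
  proof -
    define shift where "shift x = (\<lambda>j. x j + (b - a) / v i * v j)" for x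
    have "shift x \<in> {x \<in> L. x i = b}" if "x \<in> L" "x i = a" for x
    proof -
      have "shift x \<in> L"
        unfolding shift_def
        by (intro lin_subspace_add lin_subspace_smult L \<open>x \<in> L\<close> v(1))
      moreover have "shift x i = b"
        using v(2) \<open>x i = a\<close> by (simp add: shift_def)
      ultimately show ?thesis
        by simp
    qed
    then have "shift ` {x \<in> L. x i = a} \<subseteq> {x \<in> L. x i = b}"
      by blast
    moreover have "inj shift"
      by (auto simp: inj_def shift_def fun_eq_iff)
    ultimately show ?thesis
      unfolding col_count_def
      by (metis (no_types, lifting) card_inj_on_le inj_on_subset subset_UNIV
          \<open>finite L\<close> finite_subset mem_Collect_eq subsetI)
  qed
  show ?thesis
    using le[of a b] le[of b a] by simp
qed

lemma card_mult_distance_sum_le: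
  fixes A :: "('n::finite \<Rightarrow> 'a::finite) set"
  shows "card (UNIV :: 'a set) * distance_sum A \<le> (card (UNIV :: 'a set) - 1) * (card A)\<^sup>2 * R A"
proof -
  let ?q = "card (UNIV :: 'a set)"
  have "?q * distance_sum A = (\<Sum>i\<in>nonconst_cols A. ?q * col_disagreements A i)"
    by (simp add: distance_sum_eq_sum_nonconst_cols sum_distrib_left)
  also have "\<dots> \<le> (\<Sum>i\<in>nonconst_cols A. (?q - 1) * (card A)\<^sup>2)"
    by (rule sum_mono) (rule card_mult_col_disagreements_le)
  also have "\<dots> = (?q - 1) * (card A)\<^sup>2 * R A"
    by (simp add: R_eq_card_nonconst_cols)
  finally show ?thesis .
qed

lemma subspace_card_mult_col_disagreements:
  fixes L :: "('n::finite \<Rightarrow> 'a::{finite,field}) set"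
  assumes L: "lin_subspace L" and i: "i \<in> nonconst_cols L"
  shows "card (UNIV :: 'a set) * col_disagreements L i = (card (UNIV :: 'a set) - 1) * (card L)\<^sup>2"
proof -
  let ?q = "card (UNIV :: 'a set)"
  obtain x y where "x \<in> L" "y \<in> L" "x i \<noteq> y i"
    using i unfolding nonconst_cols_def by blast
  then obtain v where v: "v \<in> L" "v i \<noteq> 0"
    by metis
  define c where "c = col_count L i 0"
  have "col_count L i a = c" for a
    unfolding c_def using subspace_col_count_eq[OF L v] by simp
  then have qc: "?q * c = card L" and "col_disagreements L i + ?q * c\<^sup>2 = (card L)\<^sup>2"
    using sum_col_count[of L i] col_disagreements_add_sum_col_count_squares[of L i] by simp_all
  then have "?q * (col_disagreements L i + ?q * c\<^sup>2) = ?q * (card L)\<^sup>2"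
    by simp
  then have "?q * col_disagreements L i + (?q * c)\<^sup>2 = ?q * (card L)\<^sup>2"
    by (simp add: algebra_simps power2_eq_square)
  then have "?q * col_disagreements L i + (card L)\<^sup>2 = ?q * (card L)\<^sup>2"
    by (simp only: qc)
  then show ?thesis
    by (metis add_diff_cancel_right' diff_mult_distrib mult_1)
qed

lemma subspace_card_mult_distance_sum:
  fixes L :: "('n::finite \<Rightarrow> 'a::{finite,field}) set"
  assumes "lin_subspace L"
  shows "card (UNIV :: 'a set) * distance_sum L = (card (UNIV :: 'a set) - 1) * (card L)\<^sup>2 * R L"
  using subspace_card_mult_col_disagreements[OF assms]
  by (simp add: distance_sum_eq_sum_nonconst_cols sum_distrib_left R_eq_card_nonconst_cols)

lemma isometric_distance_sum_eq:
  assumes "isometric A B"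
  shows "distance_sum B = distance_sum A"
proof -
  obtain \<phi> where bij: "bij_betw \<phi> A B"
    and iso: "\<forall>x\<in>A. \<forall>y\<in>A. hamming (\<phi> x) (\<phi> y) = hamming x y"
    using assms unfolding isometric_def by blast
  have "distance_sum B = (\<Sum>p\<in>A \<times> A. (\<lambda>(x, y). hamming x y) (map_prod \<phi> \<phi> p))"
    unfolding distance_sum_def
    by (rule sum.reindex_bij_betw[OF bij_betw_map_prod[OF bij bij], symmetric])
  also have "\<dots> = distance_sum A"
    unfolding distance_sum_def by (rule sum.cong) (auto simp: iso)
  finally show ?thesis .
qed

lemma isometric_card_eq: "isometric A B \<Longrightarrow> card B = card A"
  unfolding isometric_def by (metis bij_betw_same_card)

theorem mainTheorem3:
  fixes L :: "('n::finite \<Rightarrow> 'a::{finite,field}) set"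
  assumes "card (UNIV :: 'n set) \<ge> 2"
    and "lin_subspace L"
    and "card L > 1"
  shows "metrically_dense L"
  unfolding metrically_dense_def
proof (intro allI impI)
  fix B assume iso: "isometric L B"
  let ?c = "(card (UNIV :: 'a set) - 1) * (card L)\<^sup>2"
  have "?c * R L = card (UNIV :: 'a set) * distance_sum L"
    using subspace_card_mult_distance_sum[OF assms(2)] by simp
  also have "\<dots> = card (UNIV :: 'a set) * distance_sum B"
    using isometric_distance_sum_eq[OF iso] by simp
  also have "\<dots> \<le> ?c * R B"
    using card_mult_distance_sum_le[of B] isometric_card_eq[OF iso] by simp
  finally have "?c * R L \<le> ?c * R B" .
  moreover have "?c > 0"
    using card_UNIV_field_ge_2[where 'a='a] assms(3) by simp
  ultimately show "R L \<le> R B"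
    by simp
qed

end
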